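(* Let $\kappa$ be a regular infinite cardinal and let $\langle W^\kappa,(T_i)_{i\in\{a,b\}},\theta\rangle$ be the $*$-type space on $S=\{h,t\}$ for players $\{a,b\}$ described in the context. For every ordinal $\alpha<\kappa$ there are $u^\kappa,w^\kappa\in W^\kappa$ such that (1) for every $\kappa$-expression $\varphi$ with $\mathrm{dp}(\varphi)\le\alpha$, $u^\kappa\in\varphi^{W^\kappa}$ iff $w^\kappa\in\varphi^{W^\kappa}$; and (2) there is a $\kappa$-expression $\psi$ with $\mathrm{dp}(\psi)=\alpha+1$ such that $u^\kappa\in\psi^{W^\kappa}$ and $w^\kappa\in(\neg\psi)^{W^\kappa}$.
   Context: Records: for $\alpha\ge1$, a record of length $\alpha$ is $r\in\{0,1\}^\alpha$ such that for every limit $\lambda\le\alpha$ there is $\gamma<\lambda$ with $r(\beta)=0$ for $\gamma\le\beta<\lambda$. Parity: finite ordinals usual (0 even); infinite $\hat\lambda+n$ ($\hat\lambda$ limit) has the parity of $n$. For limit $\lambda\le\alpha$, $o^\lambda(r)$ is the least ordinal $<\lambda$ after which $r$ is $0$ below $\lambda$; $\lambda\text{-par}(r)$ is its parity. $W^0=\{h,t\}$; $W^\alpha$ ($\alpha\ge1$) = triples $(w_0,w_a^\alpha,w_b^\alpha)$, $w_0\in\{h,t\}$, $w_a^\alpha,w_b^\alpha$ records of length $\alpha$; $w^\alpha\upharpoonright\beta$ restricts both records (and $w^\alpha\upharpoonright0=w_0$); $\pi_{\beta,\alpha}(w^\alpha)=w^\alpha\upharpoonright\beta$. For $i\in\{a,b\}$,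 $j$ the other player, $P_i(w^\alpha)$: set of $v^\alpha$ with $v_i^\alpha=w_i^\alpha$; $w_i^\alpha(0)=1\Rightarrow v_0=w_0$; $w_i^\alpha(\beta+1)=1\Rightarrow v_j^\alpha(\beta)=w_j^\alpha(\beta)$ ($\beta+1<\alpha$); $w_i^\alpha(\lambda)=1\Rightarrow\lambda\text{-par}(v_j^\alpha)=\lambda\text{-par}(w_j^\alpha)$ (limit $\lambda<\alpha$). $T_a,T_b$ map $W^\kappa$ into finitely additive probability measures on $\mathrm{Pow}(W^\kappa)$ and satisfy for all $w^\kappa$: (a) $T_i$ constant on $P_i(w^\kappa)$; (b) $T_i(w^\kappa)(P_i(w^\kappa))=1$; (c) $T_i(w^\kappa)(\{u:u_0=w_0\})=1$ if $w_i^\kappa(0)=1$, $\frac12$ otherwise; (d) for $\beta<\kappa$, $T_i(w^\kappa)(\{u:u_j^\kappa(\beta)=w_j^\kappa(\beta)\})=1$ if $w_i^\kappa(\beta+1)=1$, $\frac12$ otherwise; (e) for limit $\lambda<\kappa$, $T_i(w^\kappa)(\{u:\lambda\text{-par}(u_j^\kappa)=\lambda\text{-par}(w_j^\kappa)\})=1$ if $w_i^\kappa(\lambda)=1$, $\frac12$ otherwise; (f) for $\beta<\alpha<\kappa$, $E^\beta\subseteq W^\beta$, $u^\kappa\upharpoonright\alpha=w^\kappa\upharpoonright\alpha$ implies equal $T_i$-values on $\pi_{\beta,\kappa}^{-1}(E^\beta)$ (such $T_a,T_b$ exist). $\theta(w^\kappa)=w_0$. $\kappa$-expressions over $\Sigma_S=\mathrm{Pow}(\{h,t\})$,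 $I=\{a,b\}$: least set containing each $E\subseteq\{h,t\}$ and closed under $\neg$, $B_i^p$ ($p\in[0,1]$), and conjunctions of fewer than $\kappa$ (nonempty) expressions. Semantics: $E^{W^\kappa}=\theta^{-1}(E)$, complement, $(B_i^p\varphi)^{W^\kappa}=\{w:T_i(w)(\varphi^{W^\kappa})\ge p\}$, intersection. Depth: $\mathrm{dp}(E)=0$, $\mathrm{dp}(\neg\varphi)=\mathrm{dp}(\varphi)$, $\mathrm{dp}(B_i^p\varphi)=\mathrm{dp}(\varphi)+1$, $\mathrm{dp}(\bigwedge\Psi)=\sup_{\varphi\in\Psi}\mathrm{dp}(\varphi)$. *)

theory Defs
  imports Complex_Main
begin

(* Ordinals below kappa are the elements of a well-ordered type 'k whose order
   type is the regular infinite cardinal kappa (see hypotheses of theorem3). *)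

datatype coin = H | T
datatype player = Pa | Pb

definition other :: "player \<Rightarrow> player" where
  "other i = (if i = Pa then Pb else Pa)"

definition card_lt :: "'a set \<Rightarrow> 'b set \<Rightarrow> bool" where
  "card_lt A B \<longleftrightarrow> \<not> (\<exists>f. inj_on f B \<and> f ` B \<subseteq> A)"

definition kzero :: "'k::wellorder" where
  "kzero = (LEAST x. True)"

definition ksuc :: "'k::wellorder \<Rightarrow> 'k" where
  "ksuc g = (LEAST x. g < x)"

definition klimit :: "'k::wellorder \<Rightarrow> bool" where
  "klimit l \<longleftrightarrow> l \<noteq> kzero \<and> (\<forall>g. l \<noteq> ksuc g)"

definition keven :: "'k::wellorder \<Rightarrow> bool" where
  "keven b \<longleftrightarrow> (\<exists>l n. (l = kzero \<or> klimit l) \<and> b = (ksuc ^^ n) l \<and> even n)"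

definition krecord :: "('k::wellorder \<Rightarrow> bool) \<Rightarrow> bool" where
  "krecord r \<longleftrightarrow>
     (\<forall>l. klimit l \<longrightarrow> (\<exists>g<l. \<forall>b. g \<le> b \<and> b < l \<longrightarrow> \<not> r b)) \<and>
     (\<exists>g. \<forall>b. g \<le> b \<longrightarrow> \<not> r b)"

text \<open>Records of length alpha < kappa, encoded as functions vanishing from alpha on.\<close>
definition record_len :: "'k::wellorder \<Rightarrow> ('k \<Rightarrow> bool) \<Rightarrow> bool" where
  "record_len a r \<longleftrightarrow> (\<forall>x. a \<le> x \<longrightarrow> \<not> r x) \<and>
     (\<forall>l. klimit l \<and> l \<le> a \<longrightarrow> (\<exists>g<l. \<forall>b. g \<le> b \<and> b < l \<longrightarrow> \<not> r b))"

definition olim :: "'k::wellorder \<Rightarrow> ('k \<Rightarrow> bool) \<Rightarrow> 'k" where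
  "olim l r = (LEAST g. g < l \<and> (\<forall>b. g \<le> b \<and> b < l \<longrightarrow> \<not> r b))"

definition lpar :: "'k::wellorder \<Rightarrow> ('k \<Rightarrow> bool) \<Rightarrow> bool" where
  "lpar l r = keven (olim l r)"

type_synonym 'k world = "coin \<times> ('k \<Rightarrow> bool) \<times> ('k \<Rightarrow> bool)"

definition rec :: "player \<Rightarrow> 'k world \<Rightarrow> 'k \<Rightarrow> bool" where
  "rec i w = (if i = Pa then fst (snd w) else snd (snd w))"

definition Wk :: "('k::wellorder) world set" where
  "Wk = {w. krecord (fst (snd w)) \<and> krecord (snd (snd w))}"

text \<open>W^beta for beta < kappa (W^0 encoded with all-zero records).\<close>
definition Wlen :: "'k::wellorder \<Rightarrow> 'k world set" where
  "Wlen a = {w. record_len a (fst (snd w)) \<and> record_len a (snd (snd w))}"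

definition restr :: "'k::wellorder \<Rightarrow> 'k world \<Rightarrow> 'k world" where
  "restr a w = (fst w, \<lambda>x. x < a \<and> fst (snd w) x, \<lambda>x. x < a \<and> snd (snd w) x)"

definition Pset :: "player \<Rightarrow> ('k::wellorder) world \<Rightarrow> 'k world set" where
  "Pset i w = {v \<in> Wk. rec i v = rec i w \<and>
     (rec i w kzero \<longrightarrow> fst v = fst w) \<and>
     (\<forall>b. rec i w (ksuc b) \<longrightarrow> rec (other i) v b = rec (other i) w b) \<and>
     (\<forall>l. klimit l \<and> rec i w l \<longrightarrow> lpar l (rec (other i) v) = lpar l (rec (other i) w))}"

definition fa_prob :: "'a set \<Rightarrow> ('a set \<Rightarrow> real) \<Rightarrow> bool" where
  "fa_prob W \<mu> \<longleftrightarrow> \<mu> W = 1 \<and> (\<forall>A \<subseteq> W. 0 \<le> \<mu> A) \<and>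
     (\<forall>A B. A \<subseteq> W \<longrightarrow> B \<subseteq> W \<longrightarrow> A \<inter> B = {} \<longrightarrow> \<mu> (A \<union> B) = \<mu> A + \<mu> B)"

definition type_maps :: "(player \<Rightarrow> ('k::wellorder) world \<Rightarrow> 'k world set \<Rightarrow> real) \<Rightarrow> bool" where
  "type_maps Tm \<longleftrightarrow> (\<forall>i. \<forall>w \<in> Wk. let j = other i in
     fa_prob Wk (Tm i w) \<and>
     (\<forall>v \<in> Pset i w. Tm i v = Tm i w) \<and>
     Tm i w (Pset i w) = 1 \<and>
     Tm i w {u \<in> Wk. fst u = fst w} = (if rec i w kzero then 1 else 1/2) \<and>
     (\<forall>b. Tm i w {u \<in> Wk. rec j u b = rec j w b} = (if rec i w (ksuc b) then 1 else 1/2)) \<and>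
     (\<forall>l. klimit l \<longrightarrow> Tm i w {u \<in> Wk. lpar l (rec j u) = lpar l (rec j w)} =
        (if rec i w l then 1 else 1/2)) \<and>
     (\<forall>b a E u. b < a \<and> E \<subseteq> Wlen b \<and> u \<in> Wk \<and> restr a u = restr a w \<longrightarrow>
        Tm i u {v \<in> Wk. restr b v \<in> E} = Tm i w {v \<in> Wk. restr b v \<in> E}))"

text \<open>Raw kappa-expressions; Conj I f denotes the conjunction of the set f ` I.\<close>
datatype 'k expr = Atom "coin set" | Neg "'k expr" | Bel player real "'k expr"
  | Conj "'k set" "'k \<Rightarrow> 'k expr"

primrec wf_expr :: "('k::wellorder) expr \<Rightarrow> bool" where
  "wf_expr (Atom E) = True"
| "wf_expr (Neg \<phi>) = wf_expr \<phi>"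
| "wf_expr (Bel i p \<phi>) = (0 \<le> p \<and> p \<le> 1 \<and> wf_expr \<phi>)"
| "wf_expr (Conj I f) = (I \<noteq> {} \<and> card_lt (f ` I) (UNIV :: 'k set) \<and> (\<forall>x\<in>I. (wf_expr \<circ> f) x))"

primrec dp :: "('k::wellorder) expr \<Rightarrow> 'k" where
  "dp (Atom E) = kzero"
| "dp (Neg \<phi>) = dp \<phi>"
| "dp (Bel i p \<phi>) = ksuc (dp \<phi>)"
| "dp (Conj I f) = (LEAST y. \<forall>x\<in>I. (dp \<circ> f) x \<le> y)"

primrec sem :: "(player \<Rightarrow> ('k::wellorder) world \<Rightarrow> 'k world set \<Rightarrow> real) \<Rightarrow> 'k expr \<Rightarrow> 'k world set" where
  "sem Tm (Atom E) = {w \<in> Wk. fst w \<in> E}"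
| "sem Tm (Neg \<phi>) = Wk - sem Tm \<phi>"
| "sem Tm (Bel i p \<phi>) = {w \<in> Wk. p \<le> Tm i w (sem Tm \<phi>)}"
| "sem Tm (Conj I f) = Wk \<inter> (\<Inter>x\<in>I. (sem Tm \<circ> f) x)"

end

theory Submission
  imports Defs
begin

(* Fix alpha and take the worlds u and w with coin H, all-zero record for b, and for a the record
   that is 1 exactly at alpha in u and all-zero in w; they agree below alpha.
   A formula of depth beta only sees the restriction of a world to beta: for a belief operator of
   depth beta + 1 this is clause (f) of the type maps, since by induction the event believed in is
   determined below beta.
   Conversely, by induction on beta, the bit r_j(beta) is expressed at depth beta + 1 by
   "j knows whether X", where by clauses (c)-(e) X is the coin (beta = 0), the other player's bit g
   (beta = g + 1), or the other player's beta-parity (beta a limit, expressed at depth beta through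
   the bits below beta). The formula for r_a(alpha) separates u from w. *)

lemma kzero_le: "kzero \<le> (x::'k::wellorder)"
  unfolding kzero_def by (rule Least_le) simp

lemma klimit_gt_kzero: "klimit l \<Longrightarrow> kzero < (l::'k::wellorder)"
  using kzero_le[of l] by (auto simp: klimit_def)

lemma keven_kzero: "keven kzero"
  unfolding keven_def by (rule exI[of _ kzero], rule exI[of _ 0]) simp

lemma less_ksuc: "x < y \<Longrightarrow> x < ksuc (x::'k::wellorder)"
  unfolding ksuc_def by (rule LeastI)

lemma ksuc_le: "x < y \<Longrightarrow> ksuc x \<le> (y::'k::wellorder)"
  unfolding ksuc_def by (rule Least_le)

lemma klimit_ksuc_less: "klimit l \<Longrightarrow> x < l \<Longrightarrow> ksuc x < (l::'k::wellorder)"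
  using ksuc_le[of x l] by (auto simp: klimit_def order.order_iff_strict)

lemma olim_eq_kzero:
  assumes "klimit l" "\<forall>d<l. \<not> r d"
  shows "olim l r = kzero"
  unfolding olim_def by (rule Least_equality) (use assms klimit_gt_kzero kzero_le in auto)

lemma olim_eq_ksuc:
  assumes l: "klimit l" and g: "g < l" "r g" "\<forall>d. g < d \<and> d < l \<longrightarrow> \<not> r d"
  shows "olim l r = ksuc (g::'k::wellorder)"
  unfolding olim_def
proof (rule Least_equality)
  show "ksuc g < l \<and> (\<forall>b. ksuc g \<le> b \<and> b < l \<longrightarrow> \<not> r b)"
    using klimit_ksuc_less[OF l g(1)] less_ksuc[OF g(1)] g(3) by (meson less_le_trans)
  show "ksuc g \<le> y" if "y < l \<and> (\<forall>b. y \<le> b \<and> b < l \<longrightarrow> \<not> r b)" for y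
    using that g by (meson ksuc_le not_le)
qed

text \<open>Below a limit, a record is either identically 0 or has a last 1: the least point
  from which the record vanishes below \<open>l\<close> can be neither \<open>kzero\<close> nor a limit.\<close>
lemma krecord_last_one_below_klimit:
  assumes unbounded: "\<And>x::'k. \<exists>y. x < y" and l: "klimit (l::'k::wellorder)" and r: "krecord r"
  shows "(\<forall>d<l. \<not> r d) \<or> (\<exists>g<l. r g \<and> (\<forall>d. g < d \<and> d < l \<longrightarrow> \<not> r d))"
proof (cases "\<forall>d<l. \<not> r d")
  case nonzero: False
  define P where "P g \<longleftrightarrow> g < l \<and> (\<forall>b. g \<le> b \<and> b < l \<longrightarrow> \<not> r b)" for g
  define t where "t = Least P"
  have "\<exists>g. P g" using l r unfolding krecord_def P_def by blast
  then have t_tail: "P t" unfolding t_def by (rule LeastI_ex)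
  have t_least: "t \<le> g" if "P g" for g unfolding t_def using that by (rule Least_le)
  have "t \<noteq> kzero"
  proof
    assume "t = kzero"
    then have "\<forall>d<l. \<not> r d" using t_tail kzero_le unfolding P_def by blast
    then show False using nonzero by blast
  qed
  moreover have "\<not> klimit t"
  proof
    assume "klimit t"
    then obtain g where g: "g < t" "\<forall>b. g \<le> b \<and> b < t \<longrightarrow> \<not> r b"
      using r unfolding krecord_def by blast
    then have "P g" using t_tail unfolding P_def by (meson less_trans not_le)
    then show False using t_least g(1) by (simp add: leD)
  qed
  ultimately obtain g where t: "t = ksuc g" unfolding klimit_def by blast
  have "g < ksuc g" using unbounded[of g] by (blast intro: less_ksuc)
  then have gl: "g < l" using t_tail t unfolding P_def by (meson less_trans)
  have "r g"
  proof (rule ccontr)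
    assume "\<not> r g"
    then have "P g" using t_tail t gl unfolding P_def by (metis order.order_iff_strict ksuc_le)
    then show False using t_least t \<open>g < ksuc g\<close> by (simp add: leD)
  qed
  moreover have "\<forall>d. g < d \<and> d < l \<longrightarrow> \<not> r d" using t_tail t ksuc_le unfolding P_def by blast
  ultimately show ?thesis using gl by blast
qed simp

lemma lpar_iff:
  assumes unbounded: "\<And>x::'k. \<exists>y. x < y" and l: "klimit (l::'k::wellorder)" and r: "krecord r"
  shows "lpar l r \<longleftrightarrow> (\<forall>d<l. \<not> r d) \<or>
    (\<exists>g<l. keven (ksuc g) \<and> r g \<and> (\<forall>d. g < d \<and> d < l \<longrightarrow> \<not> r d))"
  using krecord_last_one_below_klimit[OF unbounded l r]
proof
  assume zero: "\<forall>d<l. \<not> r d"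
  then have "olim l r = kzero" by (rule olim_eq_kzero[OF l])
  then show ?thesis using zero keven_kzero unfolding lpar_def by simp
next
  assume "\<exists>g<l. r g \<and> (\<forall>d. g < d \<and> d < l \<longrightarrow> \<not> r d)"
  then obtain g where last: "g < l" "r g" "\<forall>d. g < d \<and> d < l \<longrightarrow> \<not> r d" by blast
  then have "lpar l r \<longleftrightarrow> keven (ksuc g)" unfolding lpar_def by (simp add: olim_eq_ksuc[OF l])
  moreover have "g' = g" if "g' < l" "r g'" "\<forall>d. g' < d \<and> d < l \<longrightarrow> \<not> r d" for g'
    using that last by (cases g g' rule: linorder_cases) auto
  ultimately show ?thesis using last by blast
qed

lemma card_lt_finite: "infinite U \<Longrightarrow> finite S \<Longrightarrow> card_lt S U"
  unfolding card_lt_def by (metis finite_imageD finite_subset)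

lemma card_lt_subset: "A \<subseteq> B \<Longrightarrow> card_lt B U \<Longrightarrow> card_lt A U"
  unfolding card_lt_def by blast

lemma card_lt_image:
  assumes "card_lt A U" shows "card_lt (f ` A) U"
  unfolding card_lt_def
proof
  assume "\<exists>g. inj_on g U \<and> g ` U \<subseteq> f ` A"
  then obtain g where g: "inj_on g U" "g ` U \<subseteq> f ` A" by blast
  then have "inj_on (inv_into A f \<circ> g) U"
    by (meson comp_inj_on inj_on_inv_into)
  moreover have "(inv_into A f \<circ> g) ` U \<subseteq> A"
    using g(2) by (auto simp: image_subset_iff inv_into_into)
  ultimately show False using assms unfolding card_lt_def by blast
qed

lemma restr_restr: "b \<le> c \<Longrightarrow> restr b (restr c u) = restr b u"
  unfolding restr_def by (auto simp: fun_eq_iff dest: less_le_trans)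

lemma restr_eq_mono: "restr c u = restr c w \<Longrightarrow> b \<le> c \<Longrightarrow> restr b u = restr b w"
  by (metis restr_restr)

lemma rec_krecord: "w \<in> Wk \<Longrightarrow> krecord (rec i w)"
  unfolding Wk_def rec_def by auto

lemma restr_in_Wlen: "v \<in> Wk \<Longrightarrow> restr b v \<in> Wlen b"
  unfolding Wk_def Wlen_def restr_def record_len_def krecord_def by auto blast+

lemma krecord_False: "krecord (\<lambda>x::'k::wellorder. False)"
  unfolding krecord_def using klimit_gt_kzero by blast

lemma krecord_singleton:
  assumes "\<alpha> < (\<beta>::'k::wellorder)" shows "krecord (\<lambda>x. x = \<alpha>)"
  unfolding krecord_def
proof (intro conjI allI impI)
  fix l :: 'k assume l: "klimit l"
  show "\<exists>g<l. \<forall>b. g \<le> b \<and> b < l \<longrightarrow> b \<noteq> \<alpha>"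
  proof (cases "\<alpha> < l")
    case True
    then show ?thesis using klimit_ksuc_less[OF l True] less_ksuc[OF True] by (metis leD less_le_trans)
  next
    case False
    then show ?thesis using klimit_gt_kzero[OF l] by (metis not_less order.strict_trans1)
  qed
next
  show "\<exists>g. \<forall>b. g \<le> b \<longrightarrow> b \<noteq> \<alpha>" using less_ksuc[OF assms] by (metis leD less_le_trans)
qed

lemma sem_subset_Wk: "sem Tm \<phi> \<subseteq> Wk"
  by (induction \<phi>) auto

lemma fa_prob_Diff: "fa_prob W \<mu> \<Longrightarrow> A \<subseteq> W \<Longrightarrow> \<mu> (W - A) = 1 - \<mu> A"
  unfolding fa_prob_def by (metis Diff_disjoint Diff_partition Diff_subset add_diff_cancel_left')

lemma wf_ConjI:
  "I \<noteq> {} \<Longrightarrow> card_lt (f ` I) (UNIV::'k::wellorder set) \<Longrightarrow>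
    (\<And>x. x \<in> I \<Longrightarrow> wf_expr (f x)) \<Longrightarrow> wf_expr (Conj (I::'k set) f)"
  by simp

lemma dp_Conj_le: "\<forall>x\<in>I. dp (f x) \<le> (c::'k::wellorder) \<Longrightarrow> dp (Conj I f) \<le> c"
  by (simp add: Least_le)

lemma dp_le_dp_Conj:
  "\<forall>x\<in>I. dp (f x) \<le> (c::'k::wellorder) \<Longrightarrow> x \<in> I \<Longrightarrow> dp (f x) \<le> dp (Conj I f)"
  using LeastI[of "\<lambda>y. \<forall>x\<in>I. (dp \<circ> f) x \<le> y" c] by simp

lemma dp_Conj_klimit:
  assumes l: "klimit l" and f: "\<forall>d<l. dp (f d) = ksuc d"
  shows "dp (Conj {..<l} f) = (l::'k::wellorder)"
proof -
  have bound: "\<forall>d\<in>{..<l}. dp (f d) \<le> l" using f klimit_ksuc_less[OF l] by (simp add: less_imp_le)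
  have "ksuc d \<le> dp (Conj {..<l} f)" if "d < l" for d
    using dp_le_dp_Conj[OF bound] f that by fastforce
  then have "\<not> dp (Conj {..<l} f) < l" using less_ksuc by (meson leD)
  then show ?thesis using dp_Conj_le[OF bound] by simp
qed

definition Disj :: "'k::wellorder set \<Rightarrow> ('k \<Rightarrow> 'k expr) \<Rightarrow> 'k expr" where
  "Disj I f = Neg (Conj I (\<lambda>x. Neg (f x)))"

definition Or :: "'k::wellorder expr \<Rightarrow> 'k expr \<Rightarrow> 'k expr" where
  "Or a b = Disj UNIV (\<lambda>x. if x = kzero then a else b)"

definition Kn :: "player \<Rightarrow> 'k::wellorder expr \<Rightarrow> 'k expr" where
  "Kn j a = Or (Bel j 1 a) (Bel j 1 (Neg a))"

lemma sem_Disj: "sem Tm (Disj I f) = (\<Union>x\<in>I. sem Tm (f x))"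
  unfolding Disj_def using sem_subset_Wk by auto

lemma dp_Disj: "dp (Disj I f) = dp (Conj I f)"
  by (simp add: Disj_def)

lemma wf_Disj:
  assumes "wf_expr (Conj (I::'k::wellorder set) f)" shows "wf_expr (Disj I f)"
proof -
  have "card_lt (Neg ` f ` I) (UNIV::'k set)" using assms by (simp add: card_lt_image)
  then show ?thesis using assms by (simp add: Disj_def image_image)
qed

locale star_type_space =
  fixes Tm :: "player \<Rightarrow> ('k::wellorder) world \<Rightarrow> 'k world set \<Rightarrow> real"
  assumes infinite_kappa: "infinite (UNIV :: 'k set)"
    and card_lt_lessThan: "\<And>x::'k. card_lt {..<x} (UNIV :: 'k set)"
    and regular: "\<And>A::'k set. card_lt A (UNIV :: 'k set) \<Longrightarrow> \<exists>b. \<forall>a\<in>A. a < b"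
    and type_maps: "type_maps Tm"
begin

lemma unbounded: "\<exists>y. x < (y::'k)"
proof -
  have "card_lt {x} (UNIV :: 'k set)" by (rule card_lt_finite[OF infinite_kappa]) simp
  then show ?thesis using regular by blast
qed

lemma less_ksuc_self: "x < ksuc (x::'k)"
  using unbounded[of x] by (blast intro: less_ksuc)

lemma fa_prob_Tm: "w \<in> Wk \<Longrightarrow> fa_prob Wk (Tm i w)"
  using type_maps unfolding type_maps_def Let_def by blast

lemma Tm_coin: "w \<in> Wk \<Longrightarrow> Tm i w {u \<in> Wk. fst u = fst w} = (if rec i w kzero then 1 else 1/2)"
  using type_maps unfolding type_maps_def Let_def by blast

lemma Tm_bit: "w \<in> Wk \<Longrightarrow> Tm i w {u \<in> Wk. rec (other i) u b = rec (other i) w b}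
    = (if rec i w (ksuc b) then 1 else 1/2)"
  using type_maps unfolding type_maps_def Let_def by blast

lemma Tm_lpar: "w \<in> Wk \<Longrightarrow> klimit l \<Longrightarrow>
    Tm i w {u \<in> Wk. lpar l (rec (other i) u) = lpar l (rec (other i) w)} = (if rec i w l then 1 else 1/2)"
  using type_maps unfolding type_maps_def Let_def by blast

lemma Tm_restr: "w \<in> Wk \<Longrightarrow> u \<in> Wk \<Longrightarrow> b < a \<Longrightarrow> E \<subseteq> Wlen b \<Longrightarrow> restr a u = restr a w \<Longrightarrow>
    Tm i u {v \<in> Wk. restr b v \<in> E} = Tm i w {v \<in> Wk. restr b v \<in> E}"
  using type_maps unfolding type_maps_def Let_def by blast

lemma ksuc_kzero_neq_kzero: "ksuc kzero \<noteq> (kzero::'k)"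
  using less_ksuc_self[of kzero] by simp

lemma sem_Or: "sem Tm (Or a b) = sem Tm a \<union> sem Tm b"
  unfolding Or_def sem_Disj using ksuc_kzero_neq_kzero by (auto split: if_splits)

lemma dp_Or: "dp (Or a b) = max (dp a) (dp (b::'k expr))"
proof -
  have bound_iff: "(\<forall>x::'k. dp (if x = kzero then a else b) \<le> y) \<longleftrightarrow> max (dp a) (dp b) \<le> y" for y
  proof
    assume all: "\<forall>x::'k. dp (if x = kzero then a else b) \<le> y"
    have "dp a \<le> y" using all[rule_format, of kzero] by simp
    moreover have "dp b \<le> y"
      using all[rule_format, of "ksuc kzero"] by (simp only: if_not_P[OF ksuc_kzero_neq_kzero])
    ultimately show "max (dp a) (dp b) \<le> y" by simp
  qed simp
  have "dp (Or a b) = (LEAST y. max (dp a) (dp b) \<le> y)"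
    by (simp only: Or_def dp_Disj dp.simps o_def ball_UNIV bound_iff)
  also have "\<dots> = max (dp a) (dp b)" by (rule Least_equality) auto
  finally show ?thesis .
qed

lemma wf_Or:
  assumes "wf_expr a" "wf_expr b" shows "wf_expr (Or a (b::'k expr))"
proof -
  have "range (\<lambda>x::'k. if x = kzero then a else b) \<subseteq> {a, b}" by auto
  then have "card_lt (range (\<lambda>x::'k. if x = kzero then a else b)) (UNIV :: 'k set)"
    using card_lt_finite[OF infinite_kappa] finite_subset by blast
  then show ?thesis unfolding Or_def using assms by (simp add: wf_Disj)
qed

lemma wf_Kn: "wf_expr a \<Longrightarrow> wf_expr (Kn j (a::'k expr))"
  unfolding Kn_def by (simp add: wf_Or)

lemma dp_Kn: "dp (Kn j a) = ksuc (dp (a::'k expr))"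
  unfolding Kn_def by (simp add: dp_Or)

lemma sem_Kn:
  assumes v: "v \<in> Wk"
    and Tm_v: "Tm j v {u \<in> Wk. u \<in> sem Tm a \<longleftrightarrow> v \<in> sem Tm a} = (if P then 1 else 1/2)"
  shows "v \<in> sem Tm (Kn j a) \<longleftrightarrow> P"
proof -
  have compl: "Tm j v (Wk - sem Tm a) = 1 - Tm j v (sem Tm a)"
    using fa_prob_Diff[OF fa_prob_Tm[OF v] sem_subset_Wk] .
  have "v \<in> sem Tm (Kn j a) \<longleftrightarrow> 1 \<le> Tm j v (sem Tm a) \<or> 1 \<le> Tm j v (Wk - sem Tm a)"
    using v by (simp add: Kn_def sem_Or)
  moreover have "{u \<in> Wk. u \<in> sem Tm a \<longleftrightarrow> v \<in> sem Tm a} =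
      (if v \<in> sem Tm a then sem Tm a else Wk - sem Tm a)"
    using sem_subset_Wk by auto
  ultimately show ?thesis using Tm_v compl by (cases P) (auto split: if_splits)
qed

lemma mem_sem_cong_restr:
  "wf_expr \<phi> \<Longrightarrow> u \<in> Wk \<Longrightarrow> w \<in> Wk \<Longrightarrow> restr (dp \<phi>) u = restr (dp \<phi>) w \<Longrightarrow>
     u \<in> sem Tm \<phi> \<longleftrightarrow> w \<in> sem Tm \<phi>"
proof (induction \<phi> arbitrary: u w)
  case (Atom E)
  then show ?case by (simp add: restr_def)
next
  case (Neg \<phi>)
  show ?case using Neg.IH[of u w] Neg.prems by simp
next
  case (Bel i p \<phi>)
  let ?E = "restr (dp \<phi>) ` sem Tm \<phi>"
  have "v \<in> sem Tm \<phi>" if "v \<in> Wk" "v' \<in> sem Tm \<phi>" "restr (dp \<phi>) v = restr (dp \<phi>) v'" for v v'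
    using Bel.IH[of v v'] Bel.prems(1) sem_subset_Wk that by auto
  then have sem_eq: "sem Tm \<phi> = {v \<in> Wk. restr (dp \<phi>) v \<in> ?E}" using sem_subset_Wk by blast
  have "?E \<subseteq> Wlen (dp \<phi>)" using restr_in_Wlen sem_subset_Wk by blast
  from Tm_restr[OF Bel.prems(3,2) less_ksuc_self this] Bel.prems(4)
  have "Tm i u (sem Tm \<phi>) = Tm i w (sem Tm \<phi>)" by (simp flip: sem_eq)
  then show ?case using Bel.prems(2,3) by simp
next
  case (Conj I f)
  have wf: "card_lt (f ` I) (UNIV::'k set)" "\<forall>x\<in>I. wf_expr (f x)" using Conj.prems(1) by auto
  obtain c where "\<forall>x\<in>I. dp (f x) < c" using regular[OF card_lt_image[OF wf(1), of dp]] by auto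
  then have "dp (f x) \<le> dp (Conj I f)" if "x \<in> I" for x
    using dp_le_dp_Conj[of I f c] that by (simp add: less_imp_le)
  then have "u \<in> sem Tm (f x) \<longleftrightarrow> w \<in> sem Tm (f x)" if "x \<in> I" for x
    using Conj.IH[of "f x" u w] restr_eq_mono[OF Conj.prems(4)] wf(2) Conj.prems(2,3) that by simp
  then show ?case using Conj.prems(2,3) by auto
qed

definition expresses_bit :: "player \<Rightarrow> 'k \<Rightarrow> 'k expr \<Rightarrow> bool" where
  "expresses_bit k d c \<longleftrightarrow> wf_expr c \<and> dp c = ksuc d \<and> sem Tm c = {u \<in> Wk. rec k u d}"

lemma zero_below_klimit_expr_exists:
  assumes l: "klimit l" and F: "\<And>d. d < l \<Longrightarrow> expresses_bit k d (F d)"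
  shows "\<exists>Z. wf_expr Z \<and> dp Z = l \<and> sem Tm Z = {u \<in> Wk. \<forall>d<l. \<not> rec k u d}"
proof (intro exI conjI)
  let ?Z = "Conj {..<l} (\<lambda>d. Neg (F d))"
  show "wf_expr ?Z"
    using klimit_gt_kzero[OF l] F card_lt_lessThan
    by (intro wf_ConjI card_lt_image) (auto simp: expresses_bit_def)
  show "dp ?Z = l" using F by (intro dp_Conj_klimit[OF l]) (simp add: expresses_bit_def)
  show "sem Tm ?Z = {u \<in> Wk. \<forall>d<l. \<not> rec k u d}" using F by (auto simp: expresses_bit_def)
qed

lemma last_one_below_klimit_expr_exists:
  assumes l: "klimit l" and F: "\<And>d. d < l \<Longrightarrow> expresses_bit k d (F d)" and g: "g < l"
  shows "\<exists>D. wf_expr D \<and> dp D \<le> l \<and>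
    sem Tm D = {u \<in> Wk. rec k u g \<and> (\<forall>d. g < d \<and> d < l \<longrightarrow> \<not> rec k u d)}"
proof (intro exI conjI)
  let ?D = "Conj {g..<l} (\<lambda>d. if d = g then F d else Neg (F d))"
  have "card_lt {g..<l} (UNIV::'k set)" by (rule card_lt_subset[OF _ card_lt_lessThan]) auto
  then show "wf_expr ?D" using g F by (intro wf_ConjI card_lt_image) (auto simp: expresses_bit_def)
  show "dp ?D \<le> l"
    using F klimit_ksuc_less[OF l] by (intro dp_Conj_le) (auto simp: expresses_bit_def less_imp_le)
  have "u \<in> sem Tm (if d = g then F d else Neg (F d)) \<longleftrightarrow>
      u \<in> Wk \<and> (if d = g then rec k u d else \<not> rec k u d)" if "d < l" for u d
    using F[OF that] by (auto simp: expresses_bit_def)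
  then have "u \<in> sem Tm ?D \<longleftrightarrow>
      u \<in> Wk \<and> (\<forall>d\<in>{g..<l}. if d = g then rec k u d else \<not> rec k u d)" for u
    using g by auto
  moreover have "(\<forall>d\<in>{g..<l}. if d = g then r d else \<not> r d) \<longleftrightarrow>
      r g \<and> (\<forall>d. g < d \<and> d < l \<longrightarrow> \<not> r d)" for r
    using g by (auto simp: le_less)
  ultimately show "sem Tm ?D = {u \<in> Wk. rec k u g \<and> (\<forall>d. g < d \<and> d < l \<longrightarrow> \<not> rec k u d)}" by blast
qed

lemma lpar_expr_exists:
  assumes l: "klimit l" and F: "\<And>d. d < l \<Longrightarrow> expresses_bit k d (F d)"
  shows "\<exists>p. wf_expr p \<and> dp p = l \<and> sem Tm p = {u \<in> Wk. lpar l (rec k u)}"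
proof -
  obtain Z where Z: "wf_expr Z" "dp Z = l" "sem Tm Z = {u \<in> Wk. \<forall>d<l. \<not> rec k u d}"
    using zero_below_klimit_expr_exists[OF l F] by blast
  have "\<forall>g. \<exists>D. g < l \<longrightarrow> wf_expr D \<and> dp D \<le> l \<and>
      sem Tm D = {u \<in> Wk. rec k u g \<and> (\<forall>d. g < d \<and> d < l \<longrightarrow> \<not> rec k u d)}"
    using last_one_below_klimit_expr_exists[OF l F] by blast
  from choice[OF this] obtain D where D: "\<forall>g. g < l \<longrightarrow> wf_expr (D g) \<and> dp (D g) \<le> l \<and>
      sem Tm (D g) = {u \<in> Wk. rec k u g \<and> (\<forall>d. g < d \<and> d < l \<longrightarrow> \<not> rec k u d)}"
    by blast
  define E where "E = Disj {..<l} (\<lambda>g. if keven (ksuc g) then D g else Atom {})"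
  have "wf_expr E"
    unfolding E_def using klimit_gt_kzero[OF l] D card_lt_lessThan
    by (intro wf_Disj wf_ConjI card_lt_image) auto
  moreover have "dp E \<le> l" unfolding E_def dp_Disj using D by (intro dp_Conj_le) (auto intro: kzero_le)
  moreover have "sem Tm E = {u \<in> Wk. \<exists>g<l. keven (ksuc g) \<and> rec k u g \<and>
      (\<forall>d. g < d \<and> d < l \<longrightarrow> \<not> rec k u d)}"
    unfolding E_def sem_Disj using D by (auto split: if_splits)
  ultimately show ?thesis
    using Z lpar_iff[OF unbounded l rec_krecord] wf_Or[of Z E]
    by (intro exI[of _ "Or Z E"]) (auto simp: sem_Or dp_Or)
qed

lemma expresses_bit_exists: "\<exists>c. expresses_bit j \<beta> c"
proof (induction \<beta> arbitrary: j rule: less_induct)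
  case (less \<beta>)
  obtain a where a: "wf_expr a" "dp a = \<beta>"
    and Tm_a: "\<And>v. v \<in> Wk \<Longrightarrow>
      Tm j v {u \<in> Wk. u \<in> sem Tm a \<longleftrightarrow> v \<in> sem Tm a} = (if rec j v \<beta> then 1 else 1/2)"
  proof -
    consider (zero) "\<beta> = kzero" | (succ) g where "\<beta> = ksuc g" | (limit) "klimit \<beta>"
      unfolding klimit_def by blast
    then show thesis
    proof cases
      case zero
      have coin: "x \<noteq> H \<longleftrightarrow> x = T" for x by (cases x) auto
      have "{u \<in> Wk. u \<in> sem Tm (Atom {H}) \<longleftrightarrow> v \<in> sem Tm (Atom {H})} = {u \<in> Wk. fst u = fst v}"
        if "v \<in> Wk" for v
        using that by (auto simp: coin)
      then show thesis using that[of "Atom {H}"] Tm_coin zero by simp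
    next
      case succ
      then obtain c where c: "expresses_bit (other j) g c" using less less_ksuc_self by blast
      then have "{u \<in> Wk. u \<in> sem Tm c \<longleftrightarrow> v \<in> sem Tm c} =
          {u \<in> Wk. rec (other j) u g = rec (other j) v g}" if "v \<in> Wk" for v
        using that by (auto simp: expresses_bit_def)
      then show thesis using that[of c] c Tm_bit succ by (simp add: expresses_bit_def)
    next
      case limit
      have "\<forall>d. \<exists>c. d < \<beta> \<longrightarrow> expresses_bit (other j) d c" using less by blast
      from choice[OF this] obtain F where "\<And>d. d < \<beta> \<Longrightarrow> expresses_bit (other j) d (F d)" by blast
      from lpar_expr_exists[OF limit this] obtain p
        where p: "wf_expr p" "dp p = \<beta>" "sem Tm p = {u \<in> Wk. lpar \<beta> (rec (other j) u)}" by blast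
      then have "{u \<in> Wk. u \<in> sem Tm p \<longleftrightarrow> v \<in> sem Tm p} =
          {u \<in> Wk. lpar \<beta> (rec (other j) u) = lpar \<beta> (rec (other j) v)}" if "v \<in> Wk" for v
        using that by auto
      then show thesis using that[of p] p Tm_lpar limit by simp
    qed
  qed
  have "sem Tm (Kn j a) = {v \<in> Wk. rec j v \<beta>}"
    using sem_Kn[OF _ Tm_a] sem_subset_Wk by blast
  then have "expresses_bit j \<beta> (Kn j a)" using a by (simp add: expresses_bit_def wf_Kn dp_Kn)
  then show ?case by blast
qed

end

theorem theorem3:
  fixes Tm :: "player \<Rightarrow> ('k::wellorder) world \<Rightarrow> 'k world set \<Rightarrow> real"
  assumes inf: "infinite (UNIV :: 'k set)"
    and card: "\<forall>x::'k. card_lt {..<x} (UNIV :: 'k set)"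
    and regular: "\<forall>A::'k set. card_lt A (UNIV :: 'k set) \<longrightarrow> (\<exists>b. \<forall>a\<in>A. a < b)"
    and TT: "type_maps Tm"
  shows "\<forall>\<alpha>::'k. \<exists>u\<in>Wk. \<exists>w\<in>Wk.
           (\<forall>\<phi>. wf_expr \<phi> \<and> dp \<phi> \<le> \<alpha> \<longrightarrow> (u \<in> sem Tm \<phi> \<longleftrightarrow> w \<in> sem Tm \<phi>)) \<and>
           (\<exists>\<psi>. wf_expr \<psi> \<and> dp \<psi> = ksuc \<alpha> \<and> u \<in> sem Tm \<psi> \<and> w \<in> sem Tm (Neg \<psi>))"
proof
  fix \<alpha> :: 'k
  interpret star_type_space Tm using assms by unfold_locales auto
  define u :: "'k world" where "u = (H, \<lambda>x. x = \<alpha>, \<lambda>x. False)"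
  define w :: "'k world" where "w = (H, \<lambda>x. False, \<lambda>x. False)"
  have W: "u \<in> Wk" "w \<in> Wk"
    using krecord_singleton[OF less_ksuc_self] krecord_False by (simp_all add: Wk_def u_def w_def)
  moreover have "restr \<alpha> u = restr \<alpha> w" by (auto simp: u_def w_def restr_def)
  then have "\<forall>\<phi>. wf_expr \<phi> \<and> dp \<phi> \<le> \<alpha> \<longrightarrow> (u \<in> sem Tm \<phi> \<longleftrightarrow> w \<in> sem Tm \<phi>)"
    using mem_sem_cong_restr W restr_eq_mono by blast
  moreover obtain \<chi> where "expresses_bit Pa \<alpha> \<chi>" using expresses_bit_exists by blast
  then have "wf_expr \<chi> \<and> dp \<chi> = ksuc \<alpha> \<and> u \<in> sem Tm \<chi> \<and> w \<in> sem Tm (Neg \<chi>)"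
    using W by (simp add: expresses_bit_def u_def w_def rec_def)
  ultimately show "\<exists>u\<in>Wk. \<exists>w\<in>Wk.
           (\<forall>\<phi>. wf_expr \<phi> \<and> dp \<phi> \<le> \<alpha> \<longrightarrow> (u \<in> sem Tm \<phi> \<longleftrightarrow> w \<in> sem Tm \<phi>)) \<and>
           (\<exists>\<psi>. wf_expr \<psi> \<and> dp \<psi> = ksuc \<alpha> \<and> u \<in> sem Tm \<psi> \<and> w \<in> sem Tm (Neg \<psi>))"
    by blast
qed

end
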